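(* For $K=K(\delta)>0$, $L=L(\delta)>0$, define on the uniform one-dimensional grid of spacing $h$ the finite difference scheme \[ -F^{1D,e,\delta}[u]=A^{\delta,+}\left(\lvert u_x^h\rvert^+,-u_{xx}^h\right)+A^{\delta,-}\left(-\lvert u_x^h\rvert^-,-u_{xx}^h\right). \] Then $-F^{1D,e,\delta}$ is elliptic and consistent with $-F^{1D,\delta}$, where $F^{1D,\delta}[u]=A^\delta(u_x,u_{xx})$.
   Context: $A(p,q)=(p^2q)^{1/3}$ (real cube root); $A^\delta(p,q)=\operatorname{sgn}(q)\min(\lvert A(p,q)\rvert,K\lvert p\rvert,L\lvert q\rvert)$ with $\operatorname{sgn}(0)=0$; $A^{\delta,+}(p,q)=A^\delta(p^+,q^+)$, $A^{\delta,-}(p,q)=A^\delta(p^-,q^-)$ with $x^+=\max(x,0)$, $x^-=\min(x,0)$. For a grid function $u$: $D^-_xu(x)=\frac{u(x)-u(x-h)}h$, $-D^+_xu(x)=\frac{u(x)-u(x+h)}h$, $\lvert u_x^h\rvert^+=\max\{-D^+_xu,D^-_xu,0\}$, $-\lvert u_x^h\rvert^-=\min\{-D^+_xu,D^-_xu,0\}$, $u_{xx}^h(x)=\frac{u(x+h)-2u(x)+u(x-h)}{h^2}$. A finite difference operator $F^h[u](x)=F^h(x,u(x),u(x)-u(\cdot))$ is elliptic if $r\le s$, $v(\cdot)\le w(\cdot)$ imply $F^h(x,r,v(\cdot))\le F^h(x,s,w(\cdot))$; it is consistent with $F$ if $\lim_{h\to0,\,y\to x}F^h[\phi](y)=F[\phi](x)$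 for every smooth $\phi$. *)

theory Defs
  imports "HOL-Analysis.Analysis"
begin

definition A :: "real \<Rightarrow> real \<Rightarrow> real" where
  "A p q = root 3 (p\<^sup>2 * q)"

definition Adelta :: "real \<Rightarrow> real \<Rightarrow> real \<Rightarrow> real \<Rightarrow> real" where
  "Adelta K L p q = sgn q * min \<bar>A p q\<bar> (min (K * \<bar>p\<bar>) (L * \<bar>q\<bar>))"

definition Adelta_plus :: "real \<Rightarrow> real \<Rightarrow> real \<Rightarrow> real \<Rightarrow> real" where
  "Adelta_plus K L p q = Adelta K L (max p 0) (max q 0)"

definition Adelta_minus :: "real \<Rightarrow> real \<Rightarrow> real \<Rightarrow> real \<Rightarrow> real" where
  "Adelta_minus K L p q = Adelta K L (min p 0) (min q 0)"

definition Dminus :: "real \<Rightarrow> (real \<Rightarrow> real) \<Rightarrow> real \<Rightarrow> real" where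
  "Dminus h u x = (u x - u (x - h)) / h"

definition Dplus :: "real \<Rightarrow> (real \<Rightarrow> real) \<Rightarrow> real \<Rightarrow> real" where
  "Dplus h u x = (u (x + h) - u x) / h"

text \<open>abs_plus = |u_x^h|^+ ; neg_abs_minus = - |u_x^h|^- (as defined in the paper).\<close>
definition abs_plus :: "real \<Rightarrow> (real \<Rightarrow> real) \<Rightarrow> real \<Rightarrow> real" where
  "abs_plus h u x = max (max (- Dplus h u x) (Dminus h u x)) 0"

definition neg_abs_minus :: "real \<Rightarrow> (real \<Rightarrow> real) \<Rightarrow> real \<Rightarrow> real" where
  "neg_abs_minus h u x = min (min (- Dplus h u x) (Dminus h u x)) 0"

definition uxx :: "real \<Rightarrow> (real \<Rightarrow> real) \<Rightarrow> real \<Rightarrow> real" where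
  "uxx h u x = (u (x + h) - 2 * u x + u (x - h)) / h\<^sup>2"

definition schemeE :: "real \<Rightarrow> real \<Rightarrow> real \<Rightarrow> (real \<Rightarrow> real) \<Rightarrow> real \<Rightarrow> real" where
  "schemeE K L h u x =
     Adelta_plus K L (abs_plus h u x) (- uxx h u x)
   + Adelta_minus K L (neg_abs_minus h u x) (- uxx h u x)"

text \<open>Its representation F^h(x, r, v) with v(.) standing for u(x) - u(.):
  -D^+u(x) = v(x+h)/h, D^-u(x) = v(x-h)/h, -u_xx(x) = (v(x+h)+v(x-h))/h^2.\<close>
definition schemeE_rep :: "real \<Rightarrow> real \<Rightarrow> real \<Rightarrow> real \<Rightarrow> real \<Rightarrow> (real \<Rightarrow> real) \<Rightarrow> real" where
  "schemeE_rep K L h x r v =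
     (let mDp = v (x + h) / h; Dm = v (x - h) / h; muxx = (v (x + h) + v (x - h)) / h\<^sup>2
      in Adelta_plus K L (max (max mDp Dm) 0) muxx + Adelta_minus K L (min (min mDp Dm) 0) muxx)"

definition fd_elliptic :: "(real \<Rightarrow> real \<Rightarrow> (real \<Rightarrow> real) \<Rightarrow> real) \<Rightarrow> bool" where
  "fd_elliptic Fh \<longleftrightarrow>
     (\<forall>x r s v w. r \<le> s \<longrightarrow> (\<forall>y. v y \<le> w y) \<longrightarrow> Fh x r v \<le> Fh x s w)"

definition smooth_fun :: "(real \<Rightarrow> real) \<Rightarrow> bool" where
  "smooth_fun \<phi> \<longleftrightarrow>
     (\<exists>D. D 0 = \<phi> \<and> (\<forall>n z. (D n has_real_derivative D (Suc n) z) (at z)))"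

definition fd_consistent ::
  "(real \<Rightarrow> (real \<Rightarrow> real) \<Rightarrow> real \<Rightarrow> real) \<Rightarrow> ((real \<Rightarrow> real) \<Rightarrow> real \<Rightarrow> real) \<Rightarrow> bool" where
  "fd_consistent Fh F \<longleftrightarrow>
     (\<forall>\<phi> x. smooth_fun \<phi> \<longrightarrow>
        ((\<lambda>(h, y). Fh h \<phi> y) \<longlongrightarrow> F \<phi> x) (at (0, x) within ({0<..} \<times> UNIV)))"

definition F1D :: "real \<Rightarrow> real \<Rightarrow> (real \<Rightarrow> real) \<Rightarrow> real \<Rightarrow> real" where
  "F1D K L u x = Adelta K L (deriv u x) (deriv (deriv u) x)"

end

theory Submission
  imports Defs
begin

text \<open>Ellipticity: on the quadrant where \<open>A\<^sup>\<delta>\<^sup>,\<^sup>+\<close> (resp. \<open>A\<^sup>\<delta>\<^sup>,\<^sup>-\<close>) evaluates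
  \<open>A\<^sup>\<delta>\<close>, the latter is nondecreasing in both arguments, and all difference quotients
  entering the scheme are nondecreasing in \<open>u(x) - u(\<cdot>)\<close>. Consistency: the one-sided
  quotients and \<open>u\<^sub>x\<^sub>x\<^sup>h\<close> converge to \<open>u\<^sub>x\<close> and \<open>u\<^sub>x\<^sub>x\<close> as \<open>(h, y) \<rightarrow> (0, x)\<close>,
  \<open>A\<^sup>\<delta>\<close> is continuous, and in the limit the two halves recombine to \<open>-A\<^sup>\<delta>(u\<^sub>x, u\<^sub>x\<^sub>x)\<close>
  because \<open>A\<^sup>\<delta>(p, q)\<close> is even in \<open>p\<close> and odd in \<open>q\<close>.\<close>

lemma abs_A: "\<bar>A p q\<bar> = root 3 (p\<^sup>2 * \<bar>q\<bar>)"
  unfolding A_def by (simp add: real_root_abs[symmetric] abs_mult)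

lemma abs_A_mono:
  assumes "\<bar>p\<bar> \<le> \<bar>p'\<bar>" "\<bar>q\<bar> \<le> \<bar>q'\<bar>"
  shows "\<bar>A p q\<bar> \<le> \<bar>A p' q'\<bar>"
proof -
  have "p\<^sup>2 \<le> p'\<^sup>2" using assms(1) by (metis abs_ge_zero power2_abs power_mono)
  then have "p\<^sup>2 * \<bar>q\<bar> \<le> p'\<^sup>2 * \<bar>q'\<bar>" using assms(2) by (intro mult_mono) auto
  then show ?thesis unfolding abs_A by (intro real_root_le_mono) auto
qed

lemma Adelta_magnitude_mono:
  assumes "K \<ge> 0" "L \<ge> 0" "\<bar>p\<bar> \<le> \<bar>p'\<bar>" "\<bar>q\<bar> \<le> \<bar>q'\<bar>"
  shows "min \<bar>A p q\<bar> (min (K * \<bar>p\<bar>) (L * \<bar>q\<bar>)) \<le> min \<bar>A p' q'\<bar> (min (K * \<bar>p'\<bar>) (L * \<bar>q'\<bar>))"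
  using assms by (intro min.mono abs_A_mono mult_left_mono) auto

lemma Adelta_mono_nonneg:
  assumes "K \<ge> 0" "L \<ge> 0" "0 \<le> p" "p \<le> p'" "0 \<le> q" "q \<le> q'"
  shows "Adelta K L p q \<le> Adelta K L p' q'"
proof (cases "q = 0")
  case True
  have "0 \<le> sgn q'" using assms by simp
  then show ?thesis using True assms(1,2) by (simp add: Adelta_def)
next
  case False
  then have "sgn q = 1" "sgn q' = 1" using assms by auto
  then show ?thesis using Adelta_magnitude_mono[of K L p p' q q'] assms unfolding Adelta_def by simp
qed

lemma Adelta_mono_nonpos:
  assumes "K \<ge> 0" "L \<ge> 0" "p \<le> p'" "p' \<le> 0" "q \<le> q'" "q' \<le> 0"
  shows "Adelta K L p q \<le> Adelta K L p' q'"
proof (cases "q' = 0")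
  case True
  have "sgn q \<le> 0" using assms by simp
  moreover have "0 \<le> min \<bar>A p q\<bar> (min (K * \<bar>p\<bar>) (L * \<bar>q\<bar>))" using assms(1,2) by simp
  ultimately show ?thesis using True unfolding Adelta_def by (simp add: mult_nonpos_nonneg)
next
  case False
  then have "sgn q = -1" "sgn q' = -1" using assms by auto
  then show ?thesis using Adelta_magnitude_mono[of K L p' p q' q] assms unfolding Adelta_def by simp
qed

lemma Adelta_plus_mono:
  assumes "K \<ge> 0" "L \<ge> 0" "p \<le> p'" "q \<le> q'"
  shows "Adelta_plus K L p q \<le> Adelta_plus K L p' q'"
  unfolding Adelta_plus_def using assms by (intro Adelta_mono_nonneg) auto

lemma Adelta_minus_mono:
  assumes "K \<ge> 0" "L \<ge> 0" "p \<le> p'" "q \<le> q'"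
  shows "Adelta_minus K L p q \<le> Adelta_minus K L p' q'"
  unfolding Adelta_minus_def using assms by (intro Adelta_mono_nonpos) auto

text \<open>The factor \<open>sgn q\<close> is discontinuous, but \<open>A\<^sup>\<delta>\<close> is the clipping of
  \<open>L q\<close> to \<open>[-M, M]\<close>, which is continuous.\<close>
lemma Adelta_eq_clip:
  assumes "K \<ge> 0" "L \<ge> 0"
  shows "Adelta K L p q = max (- min \<bar>A p q\<bar> (K * \<bar>p\<bar>)) (min (min \<bar>A p q\<bar> (K * \<bar>p\<bar>)) (L * q))"
proof -
  define M where "M = min \<bar>A p q\<bar> (K * \<bar>p\<bar>)"
  have "M \<ge> 0" using assms unfolding M_def by auto
  moreover have "Adelta K L p q = sgn q * min M (L * \<bar>q\<bar>)"
    unfolding Adelta_def M_def by (simp add: min.assoc)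
  moreover have "L * q \<le> 0" if "q < 0" using assms that by (simp add: mult_nonneg_nonpos)
  moreover have "L * q \<ge> 0" if "q > 0" using assms that by simp
  ultimately show ?thesis unfolding M_def[symmetric]
    by (cases q "0::real" rule: linorder_cases) (auto simp: min_def max_def)
qed

lemma tendsto_Adelta:
  assumes "K \<ge> 0" "L \<ge> 0" "(f \<longlongrightarrow> a) F" "(g \<longlongrightarrow> b) F"
  shows "((\<lambda>t. Adelta K L (f t) (g t)) \<longlongrightarrow> Adelta K L a b) F"
  unfolding Adelta_eq_clip[OF assms(1,2)] A_def
  by (intro tendsto_intros assms(3,4))

lemma Adelta_plus_minus_abs:
  "Adelta_plus K L \<bar>p\<bar> (- q) + Adelta_minus K L (- \<bar>p\<bar>) (- q) = - Adelta K L p q"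
proof -
  have "A \<bar>p\<bar> (-q) = - A p q" "A (-\<bar>p\<bar>) (-q) = - A p q"
    unfolding A_def by (simp_all add: real_root_minus[symmetric])
  then have "Adelta K L \<bar>p\<bar> (-q) = - Adelta K L p q" "Adelta K L (-\<bar>p\<bar>) (-q) = - Adelta K L p q"
    unfolding Adelta_def by (simp_all add: sgn_minus)
  moreover have "Adelta K L p 0 = 0" for p by (simp add: Adelta_def)
  ultimately show ?thesis
    unfolding Adelta_plus_def Adelta_minus_def by (cases "q \<le> 0") (auto simp: max_def min_def)
qed

lemma schemeE_eq_rep: "schemeE K L h u x = schemeE_rep K L h x (u x) (\<lambda>y. u x - u y)"
proof -
  have "- Dplus h u x = (u x - u (x + h)) / h"
    unfolding Dplus_def by (simp add: minus_divide_left)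
  moreover have "- uxx h u x = (u x - u (x + h) + (u x - u (x - h))) / h\<^sup>2"
    unfolding uxx_def by (simp add: minus_divide_left algebra_simps)
  ultimately show ?thesis
    unfolding schemeE_def schemeE_rep_def abs_plus_def neg_abs_minus_def Dminus_def Let_def
    by simp
qed

lemma schemeE_rep_elliptic:
  assumes "K \<ge> 0" "L \<ge> 0" "h > 0"
  shows "fd_elliptic (schemeE_rep K L h)"
  unfolding fd_elliptic_def
proof (intro allI impI)
  fix x r s :: real and v w :: "real \<Rightarrow> real"
  assume "\<forall>y. v y \<le> w y"
  then have "v (x + h) / h \<le> w (x + h) / h" "v (x - h) / h \<le> w (x - h) / h"
    "(v (x + h) + v (x - h)) / h\<^sup>2 \<le> (w (x + h) + w (x - h)) / h\<^sup>2"
    using assms(3) by (simp_all add: divide_right_mono add_mono)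
  then show "schemeE_rep K L h x r v \<le> schemeE_rep K L h x s w"
    unfolding schemeE_rep_def Let_def
    by (intro add_mono Adelta_plus_mono Adelta_minus_mono assms(1,2) max.mono min.mono order_refl)
qed

text \<open>Every difference quotient below is, by the mean value theorem or Taylor's formula,
  an average of a continuous function at two points within distance \<open>h\<close> of \<open>y\<close>.\<close>
lemma tendsto_two_point_average:
  fixes f :: "real \<times> real \<Rightarrow> real"
  assumes g: "isCont g x"
    and avg: "\<And>h y. h > 0 \<Longrightarrow> \<exists>a b. \<bar>a - y\<bar> \<le> h \<and> \<bar>b - y\<bar> \<le> h \<and> f (h, y) = (g a + g b) / 2"
  shows "(f \<longlongrightarrow> g x) (at (0, x) within ({0<..} \<times> UNIV))"
proof (rule tendstoI)
  fix e :: real assume "e > 0"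
  then obtain d where d: "d > 0" "\<And>z. dist z x < d \<Longrightarrow> dist (g z) (g x) < e"
    using g unfolding continuous_at_eps_delta by blast
  show "\<forall>\<^sub>F p in at (0, x) within {0::real<..} \<times> UNIV. dist (f p) (g x) < e"
    unfolding eventually_at
  proof (intro exI[of _ "d/2"] conjI ballI impI)
    show "d/2 > 0" using d by simp
    fix p assume p: "p \<in> {0::real<..} \<times> (UNIV::real set)" "p \<noteq> (0, x) \<and> dist p (0, x) < d / 2"
    obtain h y where hy: "p = (h, y)" by fastforce
    have h: "0 < h" "h < d/2"
      using p dist_fst_le[of p "(0,x)"] hy by (auto simp: dist_real_def)
    have y: "\<bar>y - x\<bar> < d/2" using p dist_snd_le[of p "(0,x)"] hy by (simp add: dist_real_def)
    obtain a b where ab: "\<bar>a - y\<bar> \<le> h" "\<bar>b - y\<bar> \<le> h" "f (h, y) = (g a + g b) / 2"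
      using avg[OF h(1)] by blast
    have "dist a x < d" "dist b x < d" using ab(1,2) h y unfolding dist_real_def by arith+
    then have "\<bar>g a - g x\<bar> < e" "\<bar>g b - g x\<bar> < e" using d by (auto simp: dist_real_def)
    then show "dist (f p) (g x) < e" using hy ab by (simp add: dist_real_def abs_less_iff field_simps)
  qed
qed

lemma tendsto_Dplus:
  assumes "\<And>z. (f has_real_derivative f' z) (at z)" "isCont f' x"
  shows "((\<lambda>(h, y). Dplus h f y) \<longlongrightarrow> f' x) (at (0, x) within ({0<..} \<times> UNIV))"
proof (rule tendsto_two_point_average[OF assms(2)])
  fix h y :: real assume h: "h > 0"
  then obtain z where "y < z" "z < y + h" "f (y + h) - f y = h * f' z"
    using MVT2[of y "y + h" f f'] assms(1) by auto
  then show "\<exists>a b. \<bar>a - y\<bar> \<le> h \<and> \<bar>b - y\<bar> \<le> h \<and> (\<lambda>(h, y). Dplus h f y) (h, y) = (f' a + f' b) / 2"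
    using h by (intro exI[of _ z]) (auto simp: Dplus_def)
qed

lemma tendsto_Dminus:
  assumes "\<And>z. (f has_real_derivative f' z) (at z)" "isCont f' x"
  shows "((\<lambda>(h, y). Dminus h f y) \<longlongrightarrow> f' x) (at (0, x) within ({0<..} \<times> UNIV))"
proof (rule tendsto_two_point_average[OF assms(2)])
  fix h y :: real assume h: "h > 0"
  then obtain z where "y - h < z" "z < y" "f y - f (y - h) = h * f' z"
    using MVT2[of "y - h" y f f'] assms(1) by auto
  then show "\<exists>a b. \<bar>a - y\<bar> \<le> h \<and> \<bar>b - y\<bar> \<le> h \<and> (\<lambda>(h, y). Dminus h f y) (h, y) = (f' a + f' b) / 2"
    using h by (intro exI[of _ z]) (auto simp: Dminus_def)
qed

lemma tendsto_uxx:
  assumes f': "\<And>z. (f has_real_derivative f' z) (at z)"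
    and f'': "\<And>z. (f' has_real_derivative f'' z) (at z)" and "isCont f'' x"
  shows "((\<lambda>(h, y). uxx h f y) \<longlongrightarrow> f'' x) (at (0, x) within ({0<..} \<times> UNIV))"
proof (rule tendsto_two_point_average[OF assms(3)])
  fix h y :: real assume h: "h > 0"
  define D :: "nat \<Rightarrow> real \<Rightarrow> real" where "D n = (if n = 0 then f else if n = 1 then f' else f'')" for n
  have D: "\<forall>m t. m < 2 \<and> a \<le> t \<and> t \<le> b \<longrightarrow> DERIV (D m) t :> D (Suc m) t" for a b :: real
    using f' f'' by (auto simp: D_def less_2_cases_iff)
  obtain t1 where t1: "y < t1" "t1 < y + h"
    "f (y + h) = (\<Sum>m<2. (D m y / fact m) * (y + h - y) ^ m) + (D 2 t1 / fact 2) * (y + h - y)\<^sup>2"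
    using Taylor_up[of 2 D f y "y + h" y, OF _ _ D] h by (auto simp: D_def)
  obtain t2 where t2: "y - h < t2" "t2 < y"
    "f (y - h) = (\<Sum>m<2. (D m y / fact m) * (y - h - y) ^ m) + (D 2 t2 / fact 2) * (y - h - y)\<^sup>2"
    using Taylor_down[of 2 D f "y - h" y y, OF _ _ D] h by (auto simp: D_def)
  have "uxx h f y = (f'' t1 + f'' t2) / 2"
    using t1(3) t2(3) h unfolding uxx_def
    by (simp add: D_def numeral_2_eq_2 field_simps power2_eq_square)
  then show "\<exists>a b. \<bar>a - y\<bar> \<le> h \<and> \<bar>b - y\<bar> \<le> h \<and> (\<lambda>(h, y). uxx h f y) (h, y) = (f'' a + f'' b) / 2"
    using t1 t2 by (intro exI[of _ t1] exI[of _ t2]) auto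
qed

lemma schemeE_consistent:
  assumes "K \<ge> 0" "L \<ge> 0"
  shows "fd_consistent (schemeE K L) (\<lambda>u x. - F1D K L u x)"
  unfolding fd_consistent_def
proof (intro allI impI)
  fix \<phi> and x :: real
  assume "smooth_fun \<phi>"
  then obtain D where D0: "D 0 = \<phi>" and D: "\<And>n z. (D n has_real_derivative D (Suc n) z) (at z)"
    unfolding smooth_fun_def by blast
  have \<phi>': "\<And>z. (\<phi> has_real_derivative D 1 z) (at z)" and \<phi>'': "\<And>z. (D 1 has_real_derivative D 2 z) (at z)"
    using D[of 0] D[of 1] D0 by (simp_all add: numeral_2_eq_2)
  have cont: "isCont (D n) x" for n using D DERIV_isCont by blast
  have "deriv \<phi> = D 1" "deriv (D 1) = D 2"
    using \<phi>' \<phi>'' by (simp_all add: DERIV_imp_deriv ext)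
  then have F: "- F1D K L \<phi> x = - Adelta K L (D 1 x) (D 2 x)" unfolding F1D_def by simp
  let ?S = "at (0::real, x) within ({0<..} \<times> UNIV)"
  have "((\<lambda>(h, y). Dplus h \<phi> y) \<longlongrightarrow> D 1 x) ?S" "((\<lambda>(h, y). Dminus h \<phi> y) \<longlongrightarrow> D 1 x) ?S"
    "((\<lambda>(h, y). uxx h \<phi> y) \<longlongrightarrow> D 2 x) ?S"
    using tendsto_Dplus[OF \<phi>' cont] tendsto_Dminus[OF \<phi>' cont] tendsto_uxx[OF \<phi>' \<phi>'' cont] by auto
  then have "((\<lambda>(h, y). schemeE K L h \<phi> y)
      \<longlongrightarrow> Adelta_plus K L (max (max (- D 1 x) (D 1 x)) 0) (- D 2 x)
        + Adelta_minus K L (min (min (- D 1 x) (D 1 x)) 0) (- D 2 x)) ?S"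
    unfolding schemeE_def Adelta_plus_def Adelta_minus_def abs_plus_def neg_abs_minus_def case_prod_beta'
    by (intro tendsto_add tendsto_Adelta assms tendsto_max tendsto_min tendsto_minus tendsto_const)
  moreover have "max (max (- D 1 x) (D 1 x)) 0 = \<bar>D 1 x\<bar>" "min (min (- D 1 x) (D 1 x)) 0 = - \<bar>D 1 x\<bar>"
    by auto
  ultimately show "((\<lambda>(h, y). schemeE K L h \<phi> y) \<longlongrightarrow> - F1D K L \<phi> x) ?S"
    unfolding F by (simp only: Adelta_plus_minus_abs)
qed

theorem mainTheorem7:
  fixes K L :: real
  assumes "K > 0" and "L > 0"
  shows "(\<forall>h u x. schemeE K L h u x = schemeE_rep K L h x (u x) (\<lambda>y. u x - u y))
    \<and> (\<forall>h > 0. fd_elliptic (schemeE_rep K L h))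
    \<and> fd_consistent (schemeE K L) (\<lambda>u x. - F1D K L u x)"
  using assms schemeE_eq_rep schemeE_rep_elliptic schemeE_consistent by simp

end
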